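(* For every integer $s\ge1$, $F_{s,2}(x)=\binom{x-2}{s-1}=\frac{1}{(s-1)!}\prod_{p=2}^{s}(x-p)$. For every integer $s\ge2$, $F_{s,3}(x)=\frac{1}{(s-1)!}(x-2s)\prod_{p=3}^{s}(x-p)$ (an empty product equals $1$).
   Context: For an integer $j\ge0$, $\binom{x}{j}=x(x-1)\cdots(x-j+1)/j!$ as a polynomial in $x$, and $\binom{x}{j}=0$ for $j<0$. For integers $s\ge1$, $k\ge1$, the Moser polynomial is $F_{s,k}(x)=\sum_{p=1}^{s}(-1)^{p-1}p^{k-1}\binom{x}{s-p}$. *)

theory Defs
  imports "HOL-Computational_Algebra.Polynomial"
begin

definition pbinom :: "int \<Rightarrow> rat poly" where
  "pbinom j = (if j < 0 then 0
     else smult (1 / fact (nat j)) (\<Prod>i<nat j. [:- of_nat i, 1:]))"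

definition moser :: "nat \<Rightarrow> nat \<Rightarrow> rat poly" where
  "moser s k = (\<Sum>p=1..s. smult ((-1) ^ (p - 1) * of_nat p ^ (k - 1)) (pbinom (int s - int p)))"

end

theory Submission
  imports Defs
begin

(* With j = p - 1, F_{n+1,k}(x) = \<Sum>_{j\<le>n} (-1)^j g(j) C(x, n-j) for the weight g(j) = (j+1)^(k-1).
   Pascal's rule turns such an alternating sum at x into the same sum at x - 1 with g replaced by
   its backward difference g(j) - g(j-1). Repeating this lowers the weights (j+1)^2, j+1 and 1 to
   the Kronecker delta at 0, whose sum is C(x, n). Hence F_{s,2}(x) = C(x-2, s-1) and
   F_{s,3}(x) = 2 C(x-3, s-1) - C(x-2, s-1), and the factorisations follow by expanding the
   binomial coefficients as falling factorials. *)

definition alt_binomial_sum :: "(nat \<Rightarrow> 'a::field_char_0) \<Rightarrow> 'a \<Rightarrow> nat \<Rightarrow> 'a" where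
  "alt_binomial_sum g x n = (\<Sum>j\<le>n. (-1) ^ j * g j * (x gchoose (n - j)))"

definition backward_diff :: "(nat \<Rightarrow> 'a::ab_group_add) \<Rightarrow> nat \<Rightarrow> 'a" where
  "backward_diff g j = g j - (case j of 0 \<Rightarrow> 0 | Suc i \<Rightarrow> g i)"

lemma alt_binomial_sum_diff:
  "alt_binomial_sum (\<lambda>j. g j - h j) x n = alt_binomial_sum g x n - alt_binomial_sum h x n"
  unfolding alt_binomial_sum_def by (simp add: algebra_simps sum_subtractf)

lemma alt_binomial_sum_scale:
  "alt_binomial_sum (\<lambda>j. c * g j) x n = c * alt_binomial_sum g x n"
  unfolding alt_binomial_sum_def by (simp add: algebra_simps sum_distrib_left)

lemma alt_binomial_sum_delta:
  "alt_binomial_sum (\<lambda>j. if j = 0 then 1 else 0) x n = x gchoose n"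
  unfolding alt_binomial_sum_def by (simp add: if_distrib if_distribR cong: if_cong)

(* Pascal's rule C(x,m) = C(x-1,m) + C(x-1,m-1), followed by summation by parts. *)
lemma alt_binomial_sum_backward_diff:
  "alt_binomial_sum g x n = alt_binomial_sum (backward_diff g) (x - 1) n"
proof (cases n)
  case 0
  then show ?thesis by (simp add: alt_binomial_sum_def backward_diff_def)
next
  case (Suc m)
  define A where "A = (\<Sum>j\<le>Suc m. (-1) ^ j * g j * ((x - 1) gchoose (Suc m - j)))"
  define B where "B = (\<Sum>j\<le>m. (-1) ^ j * g j * ((x - 1) gchoose (m - j)))"
  have pascal: "x gchoose (Suc m - j) = ((x - 1) gchoose (Suc m - j))
      + (if j \<le> m then (x - 1) gchoose (m - j) else 0)" if "j \<le> Suc m" for j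
    using that gbinomial_addition_formula[of x "m - j"]
    by (cases "j \<le> m") (auto simp: Suc_diff_le le_Suc_eq)
  have "alt_binomial_sum g x n
      = (\<Sum>j\<le>Suc m. (-1) ^ j * g j * ((x - 1) gchoose (Suc m - j))
          + (if j \<le> m then (-1) ^ j * g j * ((x - 1) gchoose (m - j)) else 0))"
    unfolding alt_binomial_sum_def Suc by (rule sum.cong) (simp_all add: pascal distrib_left)
  also have "\<dots> = A + B"
    unfolding A_def B_def sum.distrib by (simp add: atMost_Suc)
  finally have lhs: "alt_binomial_sum g x n = A + B" .
  have "alt_binomial_sum (backward_diff g) (x - 1) n
      = A - (\<Sum>j\<le>Suc m. (-1) ^ j * (case j of 0 \<Rightarrow> 0 | Suc i \<Rightarrow> g i) * ((x - 1) gchoose (Suc m - j)))"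
    unfolding alt_binomial_sum_def A_def Suc backward_diff_def
    by (simp add: algebra_simps sum_subtractf)
  also have "(\<Sum>j\<le>Suc m. (-1) ^ j * (case j of 0 \<Rightarrow> 0 | Suc i \<Rightarrow> g i) * ((x - 1) gchoose (Suc m - j))) = - B"
    unfolding B_def sum.atMost_Suc_shift by (simp add: sum_negf)
  finally show ?thesis using lhs by simp
qed

lemma backward_diff_const: "backward_diff (\<lambda>_. c) = (\<lambda>j. if j = 0 then c else 0)"
  by (simp add: backward_diff_def fun_eq_iff split: nat.split)

lemma backward_diff_succ: "backward_diff (\<lambda>j. of_nat j + 1) = (\<lambda>_. 1)"
  by (simp add: backward_diff_def fun_eq_iff split: nat.split)

lemma backward_diff_succ_square:
  "backward_diff (\<lambda>j. (of_nat j + 1) ^ 2) = (\<lambda>j. 2 * (of_nat j + 1) - (1 :: 'a::comm_ring_1))"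
  by (simp add: backward_diff_def fun_eq_iff power2_eq_square algebra_simps split: nat.split)

lemma alt_binomial_sum_one: "alt_binomial_sum (\<lambda>_. 1) x n = (x - 1) gchoose n"
  by (subst alt_binomial_sum_backward_diff) (simp add: backward_diff_const alt_binomial_sum_delta)

lemma alt_binomial_sum_succ: "alt_binomial_sum (\<lambda>j. of_nat j + 1) x n = (x - 2) gchoose n"
  by (subst alt_binomial_sum_backward_diff) (simp add: backward_diff_succ alt_binomial_sum_one diff_diff_eq)

lemma alt_binomial_sum_succ_square:
  "alt_binomial_sum (\<lambda>j. (of_nat j + 1) ^ 2) x n = 2 * ((x - 3) gchoose n) - ((x - 2) gchoose n)"
proof -
  have "alt_binomial_sum (\<lambda>j. (of_nat j + 1) ^ 2) x n
      = alt_binomial_sum (\<lambda>j. 2 * (of_nat j + 1) - 1) (x - 1) n"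
    by (subst alt_binomial_sum_backward_diff) (simp only: backward_diff_succ_square)
  also have "\<dots> = 2 * alt_binomial_sum (\<lambda>j. of_nat j + 1) (x - 1) n - alt_binomial_sum (\<lambda>_. 1) (x - 1) n"
    by (simp only: alt_binomial_sum_diff alt_binomial_sum_scale)
  finally show ?thesis
    by (simp add: alt_binomial_sum_succ alt_binomial_sum_one diff_diff_eq)
qed

lemma gbinomial_minus_of_nat_prod:
  "(x - of_nat a) gchoose n = (\<Prod>p=a..<a+n. x - of_nat p) / fact n"
proof -
  have "(\<Prod>i=0..<n. x - of_nat a - of_nat i) = (\<Prod>p=a..<a+n. x - of_nat p)"
    by (rule prod.reindex_bij_witness[where i="\<lambda>p. p - a" and j="\<lambda>i. i + a"]) (auto simp: algebra_simps)
  then show ?thesis by (simp add: gbinomial_prod_rev)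
qed

lemma poly_pbinom: "poly (pbinom (int m)) x = x gchoose m"
  unfolding pbinom_def gbinomial_prod_rev
  by (simp add: poly_prod atLeast0LessThan field_simps)

lemma poly_moser: "poly (moser (Suc n) k) x = alt_binomial_sum (\<lambda>j. (of_nat j + 1) ^ (k - 1)) x n"
proof -
  have "poly (moser (Suc n) k) x
      = (\<Sum>p=1..Suc n. (-1) ^ (p - 1) * of_nat p ^ (k - 1) * (x gchoose (Suc n - p)))"
    unfolding moser_def poly_sum
  proof (rule sum.cong)
    fix p assume "p \<in> {1..Suc n}"
    then have "int (Suc n) - int p = int (Suc n - p)" by auto
    then show "poly (smult ((-1) ^ (p - 1) * of_nat p ^ (k - 1)) (pbinom (int (Suc n) - int p))) x
        = (-1) ^ (p - 1) * of_nat p ^ (k - 1) * (x gchoose (Suc n - p))"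
      by (simp only: poly_smult poly_pbinom)
  qed simp
  also have "\<dots> = alt_binomial_sum (\<lambda>j. (of_nat j + 1) ^ (k - 1)) x n"
    unfolding alt_binomial_sum_def
    by (rule sum.reindex_bij_witness[where i="\<lambda>j. Suc j" and j="\<lambda>p. p - 1"]) auto
  finally show ?thesis .
qed

lemma poly_moser_2: "poly (moser (Suc n) 2) x = (x - 2) gchoose n"
  using alt_binomial_sum_succ[of x n] by (simp add: poly_moser)

lemma poly_moser_3: "poly (moser (Suc n) 3) x = 2 * ((x - 3) gchoose n) - ((x - 2) gchoose n)"
  using alt_binomial_sum_succ_square[of x n] by (simp add: poly_moser)

lemma moser_2_eq_pbinom_pcompose: "moser (Suc n) 2 = pcompose (pbinom (int n)) [:-2, 1:]"
  by (rule poly_ext) (simp add: poly_moser_2 poly_pcompose poly_pbinom)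

lemma moser_2_eq_prod: "moser (Suc n) 2 = smult (1 / fact n) (\<Prod>p=2..Suc n. [:- of_nat p, 1:])"
proof (rule poly_ext)
  fix x :: rat
  have "{2..Suc n} = {2..<2 + n}" by auto
  then have "poly (smult (1 / fact n) (\<Prod>p=2..Suc n. [:- of_nat p, 1:])) x
      = (\<Prod>p=2..<2 + n. x - of_nat p) / fact n"
    by (simp add: poly_prod del: prod.cl_ivl_Suc prod.op_ivl_Suc)
  also have "\<dots> = poly (moser (Suc n) 2) x"
    using gbinomial_minus_of_nat_prod[of x 2 n] by (simp add: poly_moser_2)
  finally show "poly (moser (Suc n) 2) x = poly (smult (1 / fact n) (\<Prod>p=2..Suc n. [:- of_nat p, 1:])) x"
    ..
qed

lemma moser_3_eq_prod:
  "moser (Suc (Suc m)) 3 = smult (1 / fact (Suc m))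
     ([:- (2 * of_nat (Suc (Suc m))), 1:] * (\<Prod>p=3..Suc (Suc m). [:- of_nat p, 1:]))"
proof (rule poly_ext)
  fix x :: rat
  define P where "P = (\<Prod>p=3..<3 + m. x - of_nat p)"
  have "(\<Prod>p=3..<3 + Suc m. x - of_nat p) = P * (x - of_nat (3 + m))"
    unfolding P_def add_Suc_right prod.op_ivl_Suc by simp
  then have binom_3: "(x - 3) gchoose Suc m = P * (x - of_nat (3 + m)) / fact (Suc m)"
    using gbinomial_minus_of_nat_prod[of x 3 "Suc m"] by simp
  have "(\<Prod>p=2..<2 + Suc m. x - of_nat p) = (x - 2) * P"
    unfolding P_def by (simp add: prod.atLeast_Suc_lessThan numeral_3_eq_3 del: prod.op_ivl_Suc)
  then have binom_2: "(x - 2) gchoose Suc m = (x - 2) * P / fact (Suc m)"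
    using gbinomial_minus_of_nat_prod[of x 2 "Suc m"] by simp
  have "{3..Suc (Suc m)} = {3..<3 + m}" by auto
  then have prod_3: "poly (\<Prod>p=3..Suc (Suc m). [:- of_nat p, 1:]) x = P"
    by (simp add: P_def poly_prod del: prod.cl_ivl_Suc prod.op_ivl_Suc)
  then have "poly (smult (1 / fact (Suc m))
      ([:- (2 * of_nat (Suc (Suc m))), 1:] * (\<Prod>p=3..Suc (Suc m). [:- of_nat p, 1:]))) x
      = (x - 2 * of_nat (Suc (Suc m))) * P / fact (Suc m)"
    unfolding poly_smult poly_mult prod_3 by simp
  also have "\<dots> = poly (moser (Suc (Suc m)) 3) x"
    unfolding poly_moser_3 binom_3 binom_2 by (simp add: field_simps del: fact_Suc)
  finally show "poly (moser (Suc (Suc m)) 3) x = poly (smult (1 / fact (Suc m))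
      ([:- (2 * of_nat (Suc (Suc m))), 1:] * (\<Prod>p=3..Suc (Suc m). [:- of_nat p, 1:]))) x" ..
qed

theorem mainTheorem6:
  shows "(\<forall>s::nat. s \<ge> 1 \<longrightarrow>
            moser s 2 = pcompose (pbinom (int s - 1)) [:-2, 1:] \<and>
            moser s 2 = smult (1 / fact (s - 1)) (\<Prod>p=2..s. [:- of_nat p, 1:]))
       \<and> (\<forall>s::nat. s \<ge> 2 \<longrightarrow>
            moser s 3 = smult (1 / fact (s - 1))
              ([:- (2 * of_nat s), 1:] * (\<Prod>p=3..s. [:- of_nat p, 1:])))"
proof (intro conjI allI impI)
  fix s :: nat
  assume "s \<ge> 1"
  then obtain n where s: "s = Suc n" by (cases s) auto
  show "moser s 2 = pcompose (pbinom (int s - 1)) [:-2, 1:]"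
    using moser_2_eq_pbinom_pcompose[of n] by (simp add: s)
  show "moser s 2 = smult (1 / fact (s - 1)) (\<Prod>p=2..s. [:- of_nat p, 1:])"
    using moser_2_eq_prod[of n] by (simp add: s)
next
  fix s :: nat
  assume "s \<ge> 2"
  then obtain m where s: "s = Suc (Suc m)" by (metis add_2_eq_Suc le_Suc_ex)
  show "moser s 3 = smult (1 / fact (s - 1))
      ([:- (2 * of_nat s), 1:] * (\<Prod>p=3..s. [:- of_nat p, 1:]))"
    using moser_3_eq_prod[of m] by (simp add: s)
qed

end
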